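(* Let $\mathcal M=(N,\mathcal I)$ be a loopless matroid and let $S\subseteq N$ be a random set containing each element of $N$ independently with probability $1/2$. Then with probability at least $1/100$, both $\rho_{\mathcal M|S}$ and $\rho_{\mathcal M|(N\setminus S)}$ are $(288,9)$-approximations of $\rho_{\mathcal M}$.
   Context: $\mathcal M|T$ denotes the restriction of $\mathcal M$ to $T\subseteq N$. For a matroid $\mathcal M=(N,\mathcal I)$ with rank function $r$, $D_{\mathcal M}(S,\lambda)$ is the unique inclusion-wise maximal maximizer of $|U|-\lambda r(U)$ over $U\subseteq S$, and the rank-density curve is $\rho_{\mathcal M}(t)=\max\{\lambda\ge0:r(D_{\mathcal M}(N,\lambda))\ge t\}$ for $0<t\le r(N)$, $\rho_{\mathcal M}(t)=0$ for $t>r(N)$. $(\alpha,\beta)$-downshift of a non-increasing $\rho:\mathbb R_{>0}\to\mathbb R_{\ge0}$: let $\phi(t)=\rho(\alpha)/\beta$ for $t\in(0,1]$ and $\phi(t)=\rho(\alpha t)/\beta$ for $t>1$; then $\rho'(t)=1$ if $\phi(t)\in(0,1)$ and $\rho'(t)=\phi(t)$ otherwise. A function $\tilde\rho:\mathbb R_{>0}\to\mathbb R_{\ge0}$ is an $(\alpha,\beta)$-approximation of $\rho$ if it is non-increasing and $\rho'\le\tilde\rho\le\rho$ pointwise. *)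

theory Defs
  imports Complex_Main
begin

definition matroid :: "'a set \<Rightarrow> 'a set set \<Rightarrow> bool" where
  "matroid N Ind \<longleftrightarrow> finite N \<and> (\<forall>I\<in>Ind. I \<subseteq> N) \<and> {} \<in> Ind
     \<and> (\<forall>I J. J \<in> Ind \<longrightarrow> I \<subseteq> J \<longrightarrow> I \<in> Ind)
     \<and> (\<forall>I J. I \<in> Ind \<longrightarrow> J \<in> Ind \<longrightarrow> card I < card J \<longrightarrow> (\<exists>e\<in>J - I. insert e I \<in> Ind))"

definition loopless :: "'a set \<Rightarrow> 'a set set \<Rightarrow> bool" where
  "loopless N Ind \<longleftrightarrow> (\<forall>e\<in>N. {e} \<in> Ind)"

definition restr_ind :: "'a set set \<Rightarrow> 'a set \<Rightarrow> 'a set set" where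
  "restr_ind Ind T = {I \<in> Ind. I \<subseteq> T}"

definition mrank :: "'a set set \<Rightarrow> 'a set \<Rightarrow> nat" where
  "mrank Ind U = Max {card I | I. I \<in> Ind \<and> I \<subseteq> U}"

text \<open>D(S,lambda): the unique inclusion-wise maximal maximizer of |U| - lambda r(U) over U \<subseteq> S.\<close>
definition is_dmax :: "'a set set \<Rightarrow> 'a set \<Rightarrow> real \<Rightarrow> 'a set \<Rightarrow> bool" where
  "is_dmax Ind S l U \<longleftrightarrow> U \<subseteq> S \<and>
     (\<forall>V. V \<subseteq> S \<longrightarrow> real (card V) - l * real (mrank Ind V) \<le> real (card U) - l * real (mrank Ind U))"

definition Dset :: "'a set set \<Rightarrow> 'a set \<Rightarrow> real \<Rightarrow> 'a set" where
  "Dset Ind S l = (THE U. is_dmax Ind S l U \<and> (\<forall>V. is_dmax Ind S l V \<longrightarrow> U \<subseteq> V \<longrightarrow> V = U))"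

text \<open>Rank-density curve of the matroid (N, Ind); only values at t > 0 are meaningful.\<close>
definition rank_density :: "'a set \<Rightarrow> 'a set set \<Rightarrow> real \<Rightarrow> real" where
  "rank_density N Ind t =
     (if 0 < t \<and> t \<le> real (mrank Ind N)
      then Sup {l. 0 \<le> l \<and> real (mrank Ind (Dset Ind N l)) \<ge> t}
      else 0)"

definition downshift :: "real \<Rightarrow> real \<Rightarrow> (real \<Rightarrow> real) \<Rightarrow> real \<Rightarrow> real" where
  "downshift \<alpha> \<beta> \<rho> t =
     (let \<phi> = (if t \<le> 1 then \<rho> \<alpha> / \<beta> else \<rho> (\<alpha> * t) / \<beta>)
      in if 0 < \<phi> \<and> \<phi> < 1 then 1 else \<phi>)"

definition is_approx :: "real \<Rightarrow> real \<Rightarrow> (real \<Rightarrow> real) \<Rightarrow> (real \<Rightarrow> real) \<Rightarrow> bool" where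
  "is_approx \<alpha> \<beta> \<rho> \<rho>t \<longleftrightarrow>
     (\<forall>s t. 0 < s \<longrightarrow> s \<le> t \<longrightarrow> \<rho>t t \<le> \<rho>t s) \<and>
     (\<forall>t. 0 < t \<longrightarrow> 0 \<le> \<rho>t t \<and> downshift \<alpha> \<beta> \<rho> t \<le> \<rho>t t \<and> \<rho>t t \<le> \<rho> t)"

end

theory Submission
  imports Defs
begin

text \<open>For T \<subseteq> N we have D(T, \<lambda>) \<subseteq> D(N, \<lambda>), so the density curve of M|T never exceeds that
  of M; the content is the lower bound. Call a level A = D(N, \<lambda>) of rank k \<ge> 288 heavy. A half T
  keeps rank k/288 at parameter max 1 (\<lambda>/9) unless one of two rare events happens: T meets a
  fixed basis of A in at most k/288 elements, or (when the density \<lambda>(A) of A is at least 9) some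
  independent J of size at most k/288 inside a greedy packing W of \<lfloor>\<lambda>(A)\<rfloor> bases of A leaves
  few elements of T \<inter> W outside its span. Since W has many elements outside the span of any
  such J, generating-function (Chernoff) estimates and a union bound over J give probability
  at most 2 decay^k for these events, with decay = 2^(-20/288). Heavy levels have distinct
  ranks, so a geometric series bounds the probability that T or N - T is bad by 2304/2^20.\<close>

section \<open>Counting subsets\<close>

lemma sum_pow_card_Int:
  fixes z :: real
  assumes "finite N" "Y \<subseteq> N"
  shows "(\<Sum>S\<in>Pow N. z ^ card (S \<inter> Y)) = 2 ^ (card N - card Y) * (1 + z) ^ card Y"
proof -
  let ?f = "\<lambda>x. if x \<in> Y then z else 1"
  have "(\<Prod>x\<in>N. ?f x + 1) = (\<Sum>S\<in>Pow N. (\<Prod>x\<in>S. ?f x) * (\<Prod>x\<in>N - S. 1))"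
    by (rule prod_add[OF assms(1)])
  also have "\<dots> = (\<Sum>S\<in>Pow N. z ^ card (S \<inter> Y))"
  proof (rule sum.cong)
    fix S
    assume "S \<in> Pow N"
    hence "finite S"
      using assms(1) finite_subset by auto
    hence "(\<Prod>x\<in>S. ?f x) = (\<Prod>x\<in>S \<inter> Y. z)"
      by (simp add: prod.If_cases Int_def)
    thus "(\<Prod>x\<in>S. ?f x) * (\<Prod>x\<in>N - S. 1) = z ^ card (S \<inter> Y)"
      by simp
  qed simp
  finally have "(\<Sum>S\<in>Pow N. z ^ card (S \<inter> Y)) = (\<Prod>x\<in>N. ?f x + 1)" ..
  also have "\<dots> = (\<Prod>x\<in>N. if x \<in> Y then z + 1 else 2)"
    by (intro prod.cong) auto
  also have "\<dots> = (z + 1) ^ card Y * 2 ^ card (N - Y)"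
    using prod.If_cases[OF assms(1), of "\<lambda>x. x \<in> Y" "\<lambda>x. z + 1" "\<lambda>x. 2"] assms(2)
    by (simp add: Int_absorb1 Diff_eq[symmetric])
  also have "\<dots> = 2 ^ (card N - card Y) * (1 + z) ^ card Y"
    using assms by (simp add: card_Diff_subset finite_subset add.commute)
  finally show ?thesis .
qed

lemma card_sparse_Int_mult_pow_le:
  fixes z :: real
  assumes "finite N" "Y \<subseteq> N" "0 < z" "z \<le> 1"
  shows "real (card {S \<in> Pow N. card (S \<inter> Y) \<le> m}) * z ^ m \<le> 2 ^ (card N - card Y) * (1 + z) ^ card Y"
proof -
  let ?B = "{S \<in> Pow N. card (S \<inter> Y) \<le> m}"
  have "real (card ?B) * z ^ m = (\<Sum>S\<in>?B. z ^ m)"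
    by simp
  also have "\<dots> \<le> (\<Sum>S\<in>?B. z ^ card (S \<inter> Y))"
    using assms by (intro sum_mono power_decreasing) auto
  also have "\<dots> \<le> (\<Sum>S\<in>Pow N. z ^ card (S \<inter> Y))"
    using assms by (intro sum_mono2) auto
  also have "\<dots> = 2 ^ (card N - card Y) * (1 + z) ^ card Y"
    by (rule sum_pow_card_Int[OF assms(1,2)])
  finally show ?thesis .
qed

lemma card_sparse_Int_le:
  assumes "finite N" "Y \<subseteq> N"
  shows "real (card {S \<in> Pow N. card (S \<inter> Y) \<le> m}) \<le> 2 ^ card N * (5/8) ^ card Y * 4 ^ m"
proof -
  let ?n = "card N" and ?k = "card Y"
  have "?k \<le> ?n"
    using assms card_mono by blast
  hence "(2::real) ^ ?n = 2 ^ (?n - ?k) * 2 ^ ?k"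
    by (simp flip: power_add)
  moreover have "(8::real) ^ ?k = 2 ^ ?k * 4 ^ ?k"
    by (simp flip: power_mult_distrib)
  ultimately have "2 ^ (?n - ?k) * (5/4::real) ^ ?k = 2 ^ ?n * (5/8) ^ ?k"
    by (simp add: power_divide field_simps)
  hence "real (card {S \<in> Pow N. card (S \<inter> Y) \<le> m}) / 4 ^ m \<le> 2 ^ ?n * (5/8) ^ ?k"
    using card_sparse_Int_mult_pow_le[OF assms, of "1/4" m] by (simp add: power_one_over)
  thus ?thesis
    by (simp add: pos_divide_le_eq)
qed

lemma card_small_subsets_le:
  assumes "finite W"
  shows "real (card {J \<in> Pow W. card J \<le> j}) \<le> (17/16) ^ card W * 16 ^ j"
proof -
  have "{J \<in> Pow W. card J \<le> j} = {J \<in> Pow W. card (J \<inter> W) \<le> j}"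
    by (auto simp: Int_absorb2)
  thus ?thesis
    using card_sparse_Int_mult_pow_le[OF assms order_refl, of "1/16" j] by (simp add: power_divide field_simps)
qed

lemma card_Pow_and_complement_ge:
  assumes "finite N"
  shows "2 ^ card N - 2 * real (card {S \<in> Pow N. \<not> P S}) \<le> real (card {S \<in> Pow N. P S \<and> P (N - S)})"
proof -
  let ?Bad = "{S \<in> Pow N. \<not> P S}"
  let ?X = "?Bad \<union> (\<lambda>S. N - S) ` ?Bad"
  have finP: "finite (Pow N)"
    using assms by simp
  have X: "?X \<subseteq> Pow N"
    by auto
  have "Pow N - ?X \<subseteq> {S \<in> Pow N. P S \<and> P (N - S)}"
  proof
    fix S
    assume S: "S \<in> Pow N - ?X"
    hence "N - (N - S) = S"
      by auto
    hence "N - S \<notin> ?Bad"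
      using S by (metis (no_types, lifting) DiffD2 UnI2 image_eqI)
    thus "S \<in> {S \<in> Pow N. P S \<and> P (N - S)}"
      using S by auto
  qed
  hence "card (Pow N - ?X) \<le> card {S \<in> Pow N. P S \<and> P (N - S)}"
    by (intro card_mono) (use finP in auto)
  moreover have "card (Pow N - ?X) = card (Pow N) - card ?X" "card ?X \<le> card (Pow N)"
    using card_Diff_subset[OF finite_subset[OF X finP] X] card_mono[OF finP X] by auto
  moreover have "card ?X \<le> 2 * card ?Bad"
  proof -
    have "finite ?Bad"
      using finP by simp
    hence "card ((\<lambda>S. N - S) ` ?Bad) \<le> card ?Bad"
      by (rule card_image_le)
    thus ?thesis
      using card_Un_le[of ?Bad "(\<lambda>S. N - S) ` ?Bad"] by linarith
  qed
  ultimately have "real (card (Pow N)) - 2 * real (card ?Bad) \<le> real (card {S \<in> Pow N. P S \<and> P (N - S)})"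
    by linarith
  thus ?thesis
    using card_Pow[OF assms] by simp
qed

section \<open>Numerical estimates\<close>

text \<open>A bad event at a level of rank k has probability at most decay ^ k; the estimates involve
  exponents k/288, whence the 288th root.\<close>

definition decay :: real where
  "decay = root 288 (1 / 2 ^ 20)"

lemma decay_pow: "decay ^ 288 = 1 / 2 ^ 20"
  unfolding decay_def by simp

lemma decay_nonneg: "0 \<le> decay"
  unfolding decay_def by simp

lemma le_decay_power:
  assumes "0 \<le> q" "q ^ 288 \<le> (1 / 2 ^ 20) ^ k"
  shows "q \<le> decay ^ k"
proof -
  have "(decay ^ k) ^ 288 = (1 / 2 ^ 20) ^ k"
    by (metis decay_pow power_mult mult.commute)
  hence "q ^ Suc 287 \<le> (decay ^ k) ^ Suc 287"
    using assms(2) by simp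
  thus ?thesis
    using power_le_imp_le_base decay_nonneg zero_le_power by blast
qed

lemma sum_decay_power_le: "(\<Sum>k\<in>{288..M}. decay ^ k) \<le> 576 / 2 ^ 20"
proof (cases "M < 288")
  case False
  have gap: "1 / 576 \<le> 1 - decay"
    using Bernoulli_inequality[of "decay - 1" 288] decay_nonneg decay_pow by simp
  have "(\<Sum>k\<in>{288..M}. decay ^ k) = (decay ^ 288 - decay ^ Suc M) / (1 - decay)"
    using False gap by (simp add: sum_gp)
  also have "\<dots> \<le> decay ^ 288 / (1 - decay)"
    using gap decay_nonneg by (intro divide_right_mono) auto
  also have "\<dots> \<le> decay ^ 288 / (1 / 576)"
    using gap decay_nonneg by (intro divide_left_mono) auto
  also have "\<dots> = 576 / 2 ^ 20"
    using decay_pow by simp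
  finally show ?thesis .
qed simp

lemma five_eighths_pow_le: "(5/8::real) ^ (3 * n) \<le> (1/4) ^ n"
  unfolding power_mult by (rule power_mono) (simp_all add: power_divide)

lemma seventeen_sixteenths_pow_le: "(17/16::real) ^ (16 * n) \<le> 3 ^ n"
  unfolding power_mult by (rule power_mono) (simp_all add: power_divide)

lemma basis_bound_le_decay_pow: "(5/8::real) ^ k * 4 ^ (k div 288) \<le> decay ^ k"
proof (rule le_decay_power)
  have "(5/8::real) ^ 288 * 4 \<le> (1/4) ^ 96 * 4"
    using five_eighths_pow_le[of 96] by simp
  also have "\<dots> \<le> 1 / 2 ^ 20"
    by (simp add: power_divide)
  finally have base: "(5/8::real) ^ 288 * 4 \<le> 1 / 2 ^ 20" .
  have "((5/8::real) ^ k * 4 ^ (k div 288)) ^ 288 = (5/8) ^ (k * 288) * 4 ^ (k div 288 * 288)"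
    by (simp only: power_mult_distrib power_mult)
  also have "\<dots> \<le> (5/8) ^ (k * 288) * 4 ^ k"
    by (intro mult_left_mono power_increasing) auto
  also have "\<dots> = ((5/8) ^ 288 * 4) ^ k"
    by (simp only: power_mult_distrib power_mult[symmetric] mult.commute[of k 288])
  also have "\<dots> \<le> (1 / 2 ^ 20) ^ k"
    using base by (intro power_mono) simp_all
  finally show "((5/8::real) ^ k * 4 ^ (k div 288)) ^ 288 \<le> (1 / 2 ^ 20) ^ k" .
qed simp

lemma span_factor_depth_le: "(17/16::real) ^ 288 * (5/8) ^ 143 * 4 ^ 32 \<le> 1"
proof -
  have "(5/8::real) ^ 143 \<le> (5/8) ^ (3 * 47)"
    by (rule power_decreasing) auto
  also have "\<dots> \<le> (1/4) ^ 47"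
    by (rule five_eighths_pow_le)
  finally have "(17/16::real) ^ 288 * (5/8) ^ 143 * 4 ^ 32 \<le> 3 ^ 18 * (1/4) ^ 47 * 4 ^ 32"
    using seventeen_sixteenths_pow_le[of 18] by (intro mult_right_mono mult_mono) simp_all
  also have "\<dots> \<le> 1"
    by (simp add: power_divide)
  finally show ?thesis .
qed

lemma span_factor_rank_le: "16 * (5/8::real) ^ 144 * 4 ^ 32 \<le> 1 / 2 ^ 20"
proof -
  have "16 * (5/8::real) ^ 144 * 4 ^ 32 \<le> 16 * (1/4) ^ 48 * 4 ^ 32"
    using five_eighths_pow_le[of 48] by simp
  also have "\<dots> \<le> 1 / 2 ^ 20"
    by (simp add: power_divide)
  finally show ?thesis .
qed

lemma span_bound_le_decay_pow:
  fixes L k :: nat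
  defines "y \<equiv> (k * (143 * L + 144) + 287) div 288" and "m \<equiv> ((L + 1) * k) div 9"
  shows "(17/16::real) ^ (L * k) * 16 ^ (k div 288) * ((5/8) ^ y * 4 ^ m) \<le> decay ^ k"
proof (rule le_decay_power)
  have "k * (143 * L + 144) + 287 < 288 * y + 288"
    unfolding y_def by linarith
  hence y: "143 * (L * k) + 144 * k \<le> 288 * y"
    by (simp add: algebra_simps)
  have "9 * m \<le> (L + 1) * k"
    unfolding m_def by linarith
  hence m: "288 * m \<le> 32 * (L * k) + 32 * k"
    by (simp add: algebra_simps)
  have "((17/16::real) ^ (L * k) * 16 ^ (k div 288) * ((5/8) ^ y * 4 ^ m)) ^ 288
      = (17/16) ^ (L * k * 288) * 16 ^ (k div 288 * 288) * ((5/8) ^ (y * 288) * 4 ^ (m * 288))"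
    by (simp only: power_mult_distrib power_mult)
  also have "\<dots> \<le> (17/16) ^ (L * k * 288) * 16 ^ k
      * ((5/8) ^ ((L * k) * 143 + k * 144) * 4 ^ ((L * k) * 32 + k * 32))"
    using y m by (intro mult_mono power_increasing power_decreasing) (auto simp: mult.commute)
  also have "\<dots> = ((17/16) ^ 288 * (5/8) ^ 143 * 4 ^ 32) ^ (L * k) * (16 * (5/8) ^ 144 * 4 ^ 32) ^ k"
    by (simp only: power_mult_distrib power_add power_mult[symmetric] ac_simps)
  also have "\<dots> \<le> 1 * (1 / 2 ^ 20) ^ k"
    using span_factor_depth_le span_factor_rank_le by (intro mult_mono power_le_one power_mono) simp_all
  finally show "((17/16::real) ^ (L * k) * 16 ^ (k div 288) * ((5/8) ^ y * 4 ^ m)) ^ 288 \<le> (1 / 2 ^ 20) ^ k"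
    by simp
qed simp

section \<open>Matroid rank\<close>

locale finite_matroid =
  fixes N :: "'a set" and Ind :: "'a set set"
  assumes matroid: "matroid N Ind"
begin

abbreviation r :: "'a set \<Rightarrow> nat" where "r \<equiv> mrank Ind"

lemma finite_ground: "finite N"
  using matroid by (simp add: matroid_def)

lemma indep_subset_ground: "I \<in> Ind \<Longrightarrow> I \<subseteq> N"
  using matroid by (auto simp: matroid_def)

lemma indep_empty: "{} \<in> Ind"
  using matroid by (simp add: matroid_def)

lemma indep_subset: "J \<in> Ind \<Longrightarrow> I \<subseteq> J \<Longrightarrow> I \<in> Ind"
  using matroid unfolding matroid_def by blast

lemma indep_augment: "I \<in> Ind \<Longrightarrow> J \<in> Ind \<Longrightarrow> card I < card J \<Longrightarrow> \<exists>e\<in>J - I. insert e I \<in> Ind"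
  using matroid unfolding matroid_def by blast

lemma indep_finite: "I \<in> Ind \<Longrightarrow> finite I"
  using indep_subset_ground finite_ground finite_subset by blast

lemma finite_indep_cards: "finite {card I |I. I \<in> Ind \<and> I \<subseteq> U}"
proof -
  have "{card I |I. I \<in> Ind \<and> I \<subseteq> U} \<subseteq> card ` Pow N"
    using indep_subset_ground by auto
  thus ?thesis
    using finite_ground by (meson finite_Pow_iff finite_imageI finite_subset)
qed

lemma card_indep_le_rank: "I \<in> Ind \<Longrightarrow> I \<subseteq> U \<Longrightarrow> card I \<le> r U"
  unfolding mrank_def using finite_indep_cards by (intro Max_ge) auto

lemma ex_indep_card_rank: "\<exists>I. I \<in> Ind \<and> I \<subseteq> U \<and> card I = r U"
proof -
  have "r U \<in> {card I |I. I \<in> Ind \<and> I \<subseteq> U}"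
    unfolding mrank_def using finite_indep_cards indep_empty by (intro Max_in) auto
  thus ?thesis by auto
qed

lemma rank_le_card: "finite U \<Longrightarrow> r U \<le> card U"
  using ex_indep_card_rank[of U] by (metis card_mono)

lemma rank_empty [simp]: "r {} = 0"
  using rank_le_card[of "{}"] by simp

lemma rank_mono: "U \<subseteq> V \<Longrightarrow> r U \<le> r V"
  using ex_indep_card_rank[of U] card_indep_le_rank by (metis order_trans)

lemma rank_indep: "I \<in> Ind \<Longrightarrow> r I = card I"
  using card_indep_le_rank[of I I] rank_le_card[of I] indep_finite by fastforce

lemma ex_indep_extension:
  assumes "I \<in> Ind" "I \<subseteq> U"
  shows "\<exists>K. K \<in> Ind \<and> I \<subseteq> K \<and> K \<subseteq> U \<and> card K = r U"
  using assms
proof (induction "r U - card I" arbitrary: I rule: less_induct)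
  case less
  show ?case
  proof (cases "card I < r U")
    case False
    then show ?thesis
      using less.prems card_indep_le_rank[of I U] by (intro exI[of _ I]) auto
  next
    case True
    obtain B where B: "B \<in> Ind" "B \<subseteq> U" "card B = r U"
      using ex_indep_card_rank by blast
    then obtain e where e: "e \<in> B - I" "insert e I \<in> Ind"
      using indep_augment[of I B] less.prems True by auto
    have "card (insert e I) = card I + 1"
      using e indep_finite[OF less.prems(1)] by simp
    hence "r U - card (insert e I) < r U - card I"
      using True by simp
    from less.hyps[OF this e(2)] e B less.prems
    obtain K where "K \<in> Ind" "insert e I \<subseteq> K" "K \<subseteq> U" "card K = r U"
      by auto
    thus ?thesis
      by blast
  qed
qed

lemma rank_submodular: "r (U \<union> V) + r (U \<inter> V) \<le> r U + r V"
proof -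
  obtain I where I: "I \<in> Ind" "I \<subseteq> U \<inter> V" "card I = r (U \<inter> V)"
    using ex_indep_card_rank by blast
  obtain K where K: "K \<in> Ind" "I \<subseteq> K" "K \<subseteq> U \<union> V" "card K = r (U \<union> V)"
    using ex_indep_extension[of I "U \<union> V"] I by blast
  have fin: "finite K"
    using K indep_finite by blast
  have "card (K \<inter> U) \<le> r U" "card (K \<inter> V) \<le> r V"
    using K by (auto intro!: card_indep_le_rank intro: indep_subset)
  moreover have "card (K \<inter> U \<inter> V) \<le> card I"
    using I K by (auto intro!: card_indep_le_rank intro: indep_subset)
  moreover have "card K + card (K \<inter> U \<inter> V) = card (K \<inter> U) + card (K \<inter> V)"
  proof -
    have "K = (K \<inter> U) \<union> (K \<inter> V)"
      using K by auto
    thus ?thesis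
      using card_Un_Int[of "K \<inter> U" "K \<inter> V"] fin by (metis Int_assoc Int_left_commute inf.idem finite_Int)
  qed
  moreover have "card I \<le> card (K \<inter> U \<inter> V)"
    using I K fin by (intro card_mono) auto
  ultimately show ?thesis
    using I K by linarith
qed

lemma rank_Un_le: "finite V \<Longrightarrow> r (U \<union> V) \<le> r U + card V"
proof (induction V rule: finite_induct)
  case (insert x F)
  have "r (insert x (U \<union> F)) + r ({x} \<inter> (U \<union> F)) \<le> r {x} + r (U \<union> F)"
    using rank_submodular[of "{x}" "U \<union> F"] by simp
  moreover have "r {x} \<le> 1"
    using rank_le_card[of "{x}"] by simp
  ultimately show ?case
    using insert by simp
qed simp

lemma rank_Un_eq_if_spanned:
  assumes "finite Y" "\<And>e. e \<in> Y \<Longrightarrow> r (insert e J) = r J"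
  shows "r (J \<union> Y) = r J"
  using assms
proof (induction Y rule: finite_induct)
  case (insert x F)
  have "(J \<union> F) \<union> insert x J = J \<union> insert x F"
    by auto
  hence "r (J \<union> insert x F) + r ((J \<union> F) \<inter> insert x J) \<le> r (J \<union> F) + r (insert x J)"
    using rank_submodular[of "J \<union> F" "insert x J"] by simp
  moreover have "r J \<le> r ((J \<union> F) \<inter> insert x J)"
    by (rule rank_mono) auto
  moreover have "r J \<le> r (J \<union> insert x F)"
    by (rule rank_mono) auto
  moreover have "r (J \<union> F) = r J" "r (insert x J) = r J"
    using insert by auto
  ultimately show ?case
    by linarith
qed simp

section \<open>Density maximizers\<close>

definition gain :: "real \<Rightarrow> 'a set \<Rightarrow> real" where
  "gain l U = real (card U) - l * real (r U)"

lemma is_dmax_iff: "is_dmax Ind S l U \<longleftrightarrow> U \<subseteq> S \<and> (\<forall>V. V \<subseteq> S \<longrightarrow> gain l V \<le> gain l U)"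
  by (simp add: is_dmax_def gain_def)

lemma gain_supermodular:
  assumes "U \<subseteq> N" "V \<subseteq> N" "0 \<le> l"
  shows "gain l U + gain l V \<le> gain l (U \<union> V) + gain l (U \<inter> V)"
proof -
  have "finite U" "finite V"
    using assms finite_subset finite_ground by auto
  hence "real (card (U \<union> V)) + real (card (U \<inter> V)) = real (card U) + real (card V)"
    by (metis card_Un_Int of_nat_add)
  moreover have "l * (real (r (U \<union> V)) + real (r (U \<inter> V))) \<le> l * (real (r U) + real (r V))"
    using rank_submodular[of U V] assms(3) by (intro mult_left_mono) linarith+
  ultimately show ?thesis
    unfolding gain_def by (simp add: distrib_left)
qed

lemma ex_is_dmax:
  assumes "S \<subseteq> N"
  shows "\<exists>U. is_dmax Ind S l U"
proof -
  have fin: "finite (gain l ` Pow S)"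
    using finite_subset[OF assms finite_ground] by simp
  have "Max (gain l ` Pow S) \<in> gain l ` Pow S"
    using fin by (intro Max_in) auto
  then obtain U where U: "U \<subseteq> S" "gain l U = Max (gain l ` Pow S)"
    by auto
  have "gain l V \<le> gain l U" if "V \<subseteq> S" for V
    unfolding U(2) using fin that by (intro Max_ge) auto
  thus ?thesis
    using U(1) unfolding is_dmax_iff by blast
qed

lemma is_dmax_Un:
  assumes "S \<subseteq> N" "0 \<le> l" "is_dmax Ind S l U" "is_dmax Ind S l V"
  shows "is_dmax Ind S l (U \<union> V)"
proof -
  have U: "U \<subseteq> S" "\<And>W. W \<subseteq> S \<Longrightarrow> gain l W \<le> gain l U"
    and V: "V \<subseteq> S" "\<And>W. W \<subseteq> S \<Longrightarrow> gain l W \<le> gain l V"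
    using assms(3,4) unfolding is_dmax_iff by auto
  have "gain l U + gain l V \<le> gain l (U \<union> V) + gain l (U \<inter> V)"
    using assms U V by (intro gain_supermodular) auto
  moreover have "gain l (U \<inter> V) \<le> gain l V"
    using U(1) by (intro V(2)) blast
  ultimately have "gain l U \<le> gain l (U \<union> V)"
    by linarith
  thus ?thesis
    using U V unfolding is_dmax_iff by (meson Un_subset_iff order_trans)
qed

lemma is_dmax_Union:
  assumes "S \<subseteq> N" "0 \<le> l"
  shows "is_dmax Ind S l (\<Union>{U. is_dmax Ind S l U})"
proof -
  let ?F = "{U. is_dmax Ind S l U}"
  have closed: "\<Union>G \<in> ?F" if "finite G" "G \<noteq> {}" "G \<subseteq> ?F" for G
    using that
  proof (induction G rule: finite_ne_induct)
    case (insert U G)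
    hence "is_dmax Ind S l U" "is_dmax Ind S l (\<Union>G)"
      by auto
    hence "is_dmax Ind S l (U \<union> \<Union>G)"
      by (rule is_dmax_Un[OF assms])
    thus ?case
      by simp
  qed simp
  have "finite ?F"
    using finite_subset[OF assms(1) finite_ground]
    by (auto simp: is_dmax_def intro: finite_subset[of _ "Pow S"])
  moreover have "?F \<noteq> {}"
    using ex_is_dmax[OF assms(1)] by auto
  ultimately show ?thesis
    using closed by blast
qed

lemma Dset_eq_Union: "S \<subseteq> N \<Longrightarrow> 0 \<le> l \<Longrightarrow> Dset Ind S l = \<Union>{U. is_dmax Ind S l U}"
  unfolding Dset_def by (intro the_equality) (use is_dmax_Union in blast)+

lemma Dset_is_dmax: "S \<subseteq> N \<Longrightarrow> 0 \<le> l \<Longrightarrow> is_dmax Ind S l (Dset Ind S l)"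
  using is_dmax_Union Dset_eq_Union by simp

lemma is_dmax_subset_Dset: "S \<subseteq> N \<Longrightarrow> 0 \<le> l \<Longrightarrow> is_dmax Ind S l V \<Longrightarrow> V \<subseteq> Dset Ind S l"
  by (auto simp: Dset_eq_Union)

lemma Dset_subset: "S \<subseteq> N \<Longrightarrow> 0 \<le> l \<Longrightarrow> Dset Ind S l \<subseteq> S"
  using Dset_is_dmax unfolding is_dmax_def by simp

lemma gain_le_gain_Dset: "S \<subseteq> N \<Longrightarrow> 0 \<le> l \<Longrightarrow> V \<subseteq> S \<Longrightarrow> gain l V \<le> gain l (Dset Ind S l)"
  using Dset_is_dmax unfolding is_dmax_iff by simp

lemma Dset_mono:
  assumes "T \<subseteq> S" "S \<subseteq> N" "0 \<le> l"
  shows "Dset Ind T l \<subseteq> Dset Ind S l"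
proof -
  let ?A = "Dset Ind T l" and ?B = "Dset Ind S l"
  have TN: "T \<subseteq> N"
    using assms by blast
  have A: "?A \<subseteq> T" and B: "?B \<subseteq> S"
    using Dset_subset[OF TN assms(3)] Dset_subset[OF assms(2,3)] .
  have "gain l ?A + gain l ?B \<le> gain l (?A \<union> ?B) + gain l (?A \<inter> ?B)"
    using A B assms by (intro gain_supermodular) auto
  moreover have "gain l (?A \<inter> ?B) \<le> gain l ?A"
    using gain_le_gain_Dset[OF TN assms(3)] A by blast
  ultimately have "gain l ?B \<le> gain l (?A \<union> ?B)"
    by linarith
  hence "is_dmax Ind S l (?A \<union> ?B)"
    using gain_le_gain_Dset[OF assms(2,3)] A B assms(1)
    unfolding is_dmax_iff by (blast intro: order_trans)
  thus ?thesis
    using is_dmax_subset_Dset[OF assms(2,3)] by blast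
qed

lemma Dset_eq_self:
  assumes "S \<subseteq> N" "0 \<le> l" "l \<le> 1"
  shows "Dset Ind S l = S"
proof -
  have "gain l V \<le> gain l S" if V: "V \<subseteq> S" for V
  proof -
    have fin: "finite S" "finite V"
      using finite_subset[OF assms(1) finite_ground] finite_subset[OF V] by auto
    have "S = V \<union> (S - V)"
      using V by auto
    hence "r S \<le> r V + card (S - V)"
      using rank_Un_le[of "S - V" V] fin by simp
    hence "real (r S) - real (r V) \<le> real (card S) - real (card V)"
      using card_Diff_subset[OF fin(2) V] card_mono[OF fin(1) V] by linarith
    moreover have "l * (real (r S) - real (r V)) \<le> real (r S) - real (r V)"
      using assms(2,3) rank_mono[OF V] by (intro mult_left_le_one_le) auto
    ultimately show ?thesis
      unfolding gain_def by (simp add: algebra_simps)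
  qed
  hence "S \<subseteq> Dset Ind S l"
    using is_dmax_subset_Dset assms unfolding is_dmax_iff by blast
  thus ?thesis
    using Dset_subset assms by blast
qed

lemma rank_Dset_eq_0:
  assumes "S \<subseteq> N" "real (card N) < l"
  shows "r (Dset Ind S l) = 0"
proof (rule ccontr)
  let ?D = "Dset Ind S l"
  assume "r ?D \<noteq> 0"
  have l: "0 \<le> l"
    using assms(2) of_nat_0_le_iff order.strict_trans1 by fastforce
  have "?D \<subseteq> N"
    using Dset_subset[OF assms(1) l] assms(1) by blast
  hence "real (card ?D) \<le> real (card N)"
    using finite_ground card_mono by auto
  moreover have "l \<le> l * real (r ?D)"
    using \<open>r ?D \<noteq> 0\<close> assms by (simp add: mult_le_cancel_left1)
  moreover have "gain l {} \<le> gain l ?D"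
    using gain_le_gain_Dset[OF assms(1) l] by blast
  moreover have "gain l {} = 0"
    by (simp add: gain_def)
  ultimately show False
    using assms(2) unfolding gain_def by linarith
qed

lemma Dset_eq_if_rank_eq:
  assumes "S \<subseteq> N" "0 \<le> l" "l \<le> l'" "r (Dset Ind S l) = r (Dset Ind S l')"
  shows "Dset Ind S l = Dset Ind S l'"
proof -
  let ?A = "Dset Ind S l" and ?B = "Dset Ind S l'"
  have l': "0 \<le> l'"
    using assms by linarith
  have A: "?A \<subseteq> S" and B: "?B \<subseteq> S"
    using Dset_subset assms l' by auto
  have "gain l ?B \<le> gain l ?A" "gain l' ?A \<le> gain l' ?B"
    using gain_le_gain_Dset[OF assms(1,2) B] gain_le_gain_Dset[OF assms(1) l' A] .
  hence eq: "card ?A = card ?B"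
    using assms(4) unfolding gain_def by simp
  hence "is_dmax Ind S l ?B"
    using gain_le_gain_Dset[OF assms(1,2)] B assms(4) unfolding is_dmax_iff gain_def by simp
  hence "?B \<subseteq> ?A"
    using is_dmax_subset_Dset[OF assms(1,2)] by blast
  moreover have "finite ?A"
    using finite_subset[OF A finite_subset[OF assms(1) finite_ground]] .
  ultimately show ?thesis
    using card_subset_eq[of ?A ?B] eq by simp
qed

lemma mrank_restr_ind: "U \<subseteq> S \<Longrightarrow> mrank (restr_ind Ind S) U = r U"
proof -
  assume "U \<subseteq> S"
  hence "{card I |I. I \<in> restr_ind Ind S \<and> I \<subseteq> U} = {card I |I. I \<in> Ind \<and> I \<subseteq> U}"
    unfolding restr_ind_def by blast
  thus ?thesis
    unfolding mrank_def by simp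
qed

lemma Dset_restr_ind: "Dset (restr_ind Ind S) S l = Dset Ind S l"
proof -
  have "is_dmax (restr_ind Ind S) S l U = is_dmax Ind S l U" for U
    unfolding is_dmax_def by (simp add: mrank_restr_ind cong: conj_cong imp_cong)
  thus ?thesis
    unfolding Dset_def by simp
qed

section \<open>Rank-density curves of restrictions\<close>

lemma restr_ind_ground: "restr_ind Ind N = Ind"
  unfolding restr_ind_def using indep_subset_ground by blast

abbreviation rho :: "'a set \<Rightarrow> real \<Rightarrow> real" where
  "rho S \<equiv> rank_density S (restr_ind Ind S)"

definition density_levels :: "'a set \<Rightarrow> real \<Rightarrow> real set" where
  "density_levels S t = {l. 0 \<le> l \<and> t \<le> real (r (Dset Ind S l))}"

lemma rho_eq:
  assumes "S \<subseteq> N"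
  shows "rho S t = (if 0 < t \<and> t \<le> real (r S) then Sup (density_levels S t) else 0)"
proof -
  have "mrank (restr_ind Ind S) (Dset (restr_ind Ind S) S l) = r (Dset Ind S l)" if "0 \<le> l" for l
    using Dset_restr_ind mrank_restr_ind Dset_subset[OF assms that] by metis
  hence "{l. 0 \<le> l \<and> t \<le> real (mrank (restr_ind Ind S) (Dset (restr_ind Ind S) S l))}
      = density_levels S t"
    unfolding density_levels_def by auto
  thus ?thesis
    unfolding rank_density_def by (simp add: mrank_restr_ind)
qed

lemma bdd_above_density_levels:
  assumes "S \<subseteq> N" "0 < t"
  shows "bdd_above (density_levels S t)"
proof (rule bdd_aboveI)
  fix l
  assume "l \<in> density_levels S t"
  thus "l \<le> real (card N)"
    using rank_Dset_eq_0[OF assms(1), of l] assms(2) unfolding density_levels_def by force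
qed

lemma zero_in_density_levels: "S \<subseteq> N \<Longrightarrow> t \<le> real (r S) \<Longrightarrow> 0 \<in> density_levels S t"
  using Dset_eq_self unfolding density_levels_def by simp

lemma rho_nonneg: "S \<subseteq> N \<Longrightarrow> 0 \<le> rho S t"
  using zero_in_density_levels bdd_above_density_levels by (auto simp: rho_eq intro: cSup_upper)

lemma rho_antimono:
  assumes "S \<subseteq> N" "0 < s" "s \<le> t"
  shows "rho S t \<le> rho S s"
proof (cases "t \<le> real (r S)")
  case True
  have "density_levels S t \<subseteq> density_levels S s"
    unfolding density_levels_def using assms by auto
  hence "Sup (density_levels S t) \<le> Sup (density_levels S s)"
    using zero_in_density_levels[OF assms(1) True] bdd_above_density_levels[OF assms(1,2)]
    by (intro cSup_subset_mono) auto
  thus ?thesis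
    using True assms by (simp add: rho_eq)
next
  case False
  thus ?thesis
    using rho_nonneg[OF assms(1)] by (simp add: rho_eq[OF assms(1), of t])
qed

lemma rho_le_rho_ground:
  assumes "S \<subseteq> N" "0 < t"
  shows "rho S t \<le> rho N t"
proof (cases "t \<le> real (r S)")
  case True
  have "density_levels S t \<subseteq> density_levels N t"
  proof
    fix l
    assume l: "l \<in> density_levels S t"
    hence "r (Dset Ind S l) \<le> r (Dset Ind N l)"
      using Dset_mono[OF assms(1) order_refl] rank_mono by (simp add: density_levels_def)
    thus "l \<in> density_levels N t"
      using l unfolding density_levels_def by auto
  qed
  hence "Sup (density_levels S t) \<le> Sup (density_levels N t)"
    using zero_in_density_levels[OF assms(1) True] bdd_above_density_levels[OF order_refl assms(2)]
    by (intro cSup_subset_mono) auto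
  moreover have "r S \<le> r N"
    using rank_mono assms(1) .
  ultimately show ?thesis
    using True assms by (auto simp: rho_eq)
next
  case False
  thus ?thesis
    using rho_nonneg[OF order_refl] by (simp add: rho_eq[OF assms(1), of t])
qed

lemma le_rho:
  assumes "S \<subseteq> N" "0 < t" "0 \<le> l" "t \<le> real (r (Dset Ind S l))"
  shows "l \<le> rho S t"
proof -
  have "r (Dset Ind S l) \<le> r S"
    using Dset_subset[OF assms(1,3)] rank_mono by blast
  moreover have "l \<in> density_levels S t"
    unfolding density_levels_def using assms by simp
  ultimately show ?thesis
    using assms bdd_above_density_levels[OF assms(1,2)] by (auto simp: rho_eq intro: cSup_upper)
qed

lemma rho_le:
  assumes "S \<subseteq> N" "0 \<le> c" "\<And>l. 0 < l \<Longrightarrow> t \<le> real (r (Dset Ind S l)) \<Longrightarrow> l \<le> c"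
  shows "rho S t \<le> c"
proof (cases "0 < t \<and> t \<le> real (r S)")
  case True
  have "Sup (density_levels S t) \<le> c"
    using zero_in_density_levels[OF assms(1)] True assms(2,3)
    by (intro cSup_least) (auto simp: density_levels_def less_eq_real_def)
  thus ?thesis
    using True by (simp add: rho_eq[OF assms(1)])
next
  case False
  thus ?thesis
    using assms(2) by (auto simp: rho_eq[OF assms(1)])
qed

lemma ex_level_if_rho_pos:
  assumes "S \<subseteq> N" "0 < rho S t"
  obtains l where "0 < l" "t \<le> real (r (Dset Ind S l))"
  using rho_le[OF assms(1) order_refl] assms(2) by force

section \<open>Greedy packings of bases\<close>

definition basis_of :: "'a set \<Rightarrow> 'a set" where
  "basis_of X = (SOME I. I \<in> Ind \<and> I \<subseteq> X \<and> card I = r X)"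

lemma basis_of: "basis_of X \<in> Ind" "basis_of X \<subseteq> X" "card (basis_of X) = r X"
proof -
  have "basis_of X \<in> Ind \<and> basis_of X \<subseteq> X \<and> card (basis_of X) = r X"
    unfolding basis_of_def using ex_indep_card_rank[of X] by (rule someI_ex)
  thus "basis_of X \<in> Ind" "basis_of X \<subseteq> X" "card (basis_of X) = r X"
    by auto
qed

primrec packing :: "'a set \<Rightarrow> nat \<Rightarrow> 'a set" where
  "packing A 0 = {}"
| "packing A (Suc i) = packing A i \<union> basis_of (A - packing A i)"

lemma packing_subset: "packing A i \<subseteq> A"
  by (induction i) (use basis_of(2) in auto)

lemma card_packing_le: "card (packing A i) \<le> i * r A"
proof (induction i)
  case (Suc i)
  have "card (packing A (Suc i)) \<le> card (packing A i) + card (basis_of (A - packing A i))"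
    by (simp add: card_Un_le)
  also have "card (basis_of (A - packing A i)) \<le> r A"
    using basis_of(3) rank_mono[of "A - packing A i" A] by auto
  finally show ?case
    using Suc by simp
qed simp

definition nonspan :: "'a set \<Rightarrow> 'a set" where
  "nonspan J = {e \<in> N. r J < r (insert e J)}"

lemma card_le_card_Int_nonspan:
  assumes J: "J \<in> Ind" and B: "B \<in> Ind"
  shows "card B \<le> card (B \<inter> nonspan J) + card J"
proof -
  let ?Y = "B - nonspan J"
  have finB: "finite B"
    using B indep_finite by blast
  have "r (insert e J) = r J" if "e \<in> ?Y" for e
    using that indep_subset_ground[OF B] rank_mono[of J "insert e J"]
    unfolding nonspan_def by fastforce
  hence "r (J \<union> ?Y) = r J"
    using finB by (intro rank_Un_eq_if_spanned) auto
  moreover have "card ?Y = r ?Y"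
    using rank_indep indep_subset[OF B] by (metis Diff_subset)
  moreover have "r ?Y \<le> r (J \<union> ?Y)"
    by (rule rank_mono) auto
  ultimately have "card ?Y \<le> card J"
    using rank_indep[OF J] by simp
  moreover have "card B = card (B \<inter> nonspan J) + card ?Y"
    using finB card_Int_Diff by blast
  ultimately show ?thesis
    by linarith
qed

definition density_ratios :: "'a set \<Rightarrow> real set" where
  "density_ratios A = {real (card (A - U)) / (real (r A) - real (r U)) | U. U \<subseteq> A \<and> r U < r A}"

text \<open>For r A > 0, min_ratio A is the density \<lambda>(A): the largest \<lambda> for which A itself maximizes |U| - \<lambda> r U
  over U \<subseteq> A.\<close>

definition min_ratio :: "'a set \<Rightarrow> real" where
  "min_ratio A = Min (density_ratios A)"

lemma finite_density_ratios: "finite A \<Longrightarrow> finite (density_ratios A)"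
proof -
  assume "finite A"
  moreover have "density_ratios A \<subseteq> (\<lambda>U. real (card (A - U)) / (real (r A) - real (r U))) ` Pow A"
    unfolding density_ratios_def by auto
  ultimately show ?thesis
    by (meson finite_Pow_iff finite_imageI finite_subset)
qed

lemma min_ratio_le:
  assumes "finite A" "U \<subseteq> A"
  shows "min_ratio A * (real (r A) - real (r U)) \<le> real (card (A - U))"
proof (cases "r U < r A")
  case True
  have "real (card (A - U)) / (real (r A) - real (r U)) \<in> density_ratios A"
    unfolding density_ratios_def using True assms by auto
  hence "min_ratio A \<le> real (card (A - U)) / (real (r A) - real (r U))"
    unfolding min_ratio_def using finite_density_ratios[OF assms(1)] by simp
  thus ?thesis
    using True by (simp add: pos_le_divide_eq)
next
  case False
  thus ?thesis
    using rank_mono[OF assms(2)] by simp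
qed

lemma le_min_ratio_Dset:
  assumes "0 \<le> l" "0 < r (Dset Ind N l)"
  shows "l \<le> min_ratio (Dset Ind N l)"
proof -
  let ?A = "Dset Ind N l"
  have finA: "finite ?A"
    using finite_subset[OF Dset_subset[OF order_refl assms(1)] finite_ground] .
  have "l \<le> x" if "x \<in> density_ratios ?A" for x
  proof -
    obtain U where U: "U \<subseteq> ?A" "r U < r ?A" "x = real (card (?A - U)) / (real (r ?A) - real (r U))"
      using \<open>x \<in> density_ratios ?A\<close> unfolding density_ratios_def by auto
    have "gain l U \<le> gain l ?A"
      using gain_le_gain_Dset[OF order_refl assms(1)] U(1) Dset_subset[OF order_refl assms(1)] by blast
    moreover have "real (card (?A - U)) = real (card ?A) - real (card U)"
      using U(1) finA by (simp add: card_Diff_subset finite_subset of_nat_diff card_mono)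
    ultimately show "l \<le> x"
      using U(2,3) unfolding gain_def by (simp add: pos_le_divide_eq algebra_simps)
  qed
  moreover have "density_ratios ?A \<noteq> {}"
    unfolding density_ratios_def using assms(2) by auto
  ultimately show ?thesis
    unfolding min_ratio_def using finite_density_ratios[OF finA] by simp
qed

lemma rank_Diff_packing_ge:
  assumes "finite A" "0 < min_ratio A"
  shows "real (r A) - real i * real (r A) / min_ratio A \<le> real (r (A - packing A i))"
proof -
  have "A - (A - packing A i) = packing A i"
    using packing_subset by blast
  hence "min_ratio A * (real (r A) - real (r (A - packing A i))) \<le> real (card (packing A i))"
    using min_ratio_le[OF assms(1), of "A - packing A i"] by simp
  also have "\<dots> \<le> real i * real (r A)"
    using card_packing_le[of A i] by (metis of_nat_le_iff of_nat_mult)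
  finally show ?thesis
    using assms(2) by (simp add: field_simps)
qed

text \<open>Round i of the packing contributes at least r A - i r A / min_ratio A - card J new elements
  outside the span of J; summing over the rounds gives a quadratic bound.\<close>

lemma card_packing_Int_nonspan_ge:
  assumes A: "finite A" "0 < min_ratio A" and J: "J \<in> Ind"
  shows "real i * real (r A) - real (r A) * (real i * (real i - 1)) / (2 * min_ratio A) - real i * real (card J)
         \<le> real (card (packing A i \<inter> nonspan J))"
proof (induction i)
  case (Suc i)
  let ?P = "packing A i" and ?B = "basis_of (A - packing A i)" and ?X = "nonspan J"
    and ?k = "real (r A)" and ?l = "min_ratio A"
  have "finite ?P" "finite ?B"
    using finite_subset[OF packing_subset A(1)] finite_subset[OF basis_of(2)] A(1) by auto
  moreover have "packing A (Suc i) \<inter> ?X = (?P \<inter> ?X) \<union> (?B \<inter> ?X)" "(?P \<inter> ?X) \<inter> (?B \<inter> ?X) = {}"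
    using basis_of(2)[of "A - ?P"] by auto
  ultimately have "card (packing A (Suc i) \<inter> ?X) = card (?P \<inter> ?X) + card (?B \<inter> ?X)"
    by (simp add: card_Un_disjoint)
  moreover have "card ?B \<le> card (?B \<inter> ?X) + card J"
    using card_le_card_Int_nonspan[OF J basis_of(1)] .
  moreover have "?k - real i * ?k / ?l \<le> real (card ?B)"
    using rank_Diff_packing_ge[OF A] basis_of(3) by simp
  moreover have split: "real (Suc i) * ?k - ?k * (real (Suc i) * (real (Suc i) - 1)) / (2 * ?l)
      - real (Suc i) * real (card J)
     = (real i * ?k - ?k * (real i * (real i - 1)) / (2 * ?l) - real i * real (card J))
       + (?k - real i * ?k / ?l - real (card J))"
    using A(2) by (simp add: field_simps)
  ultimately show ?case
    unfolding split using Suc.IH by linarith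
qed simp

definition packing_depth :: "'a set \<Rightarrow> nat" where
  "packing_depth A = nat \<lfloor>min_ratio A\<rfloor>"

lemma min_ratio_less_packing_depth: "0 \<le> min_ratio A \<Longrightarrow> min_ratio A < real (packing_depth A) + 1"
  unfolding packing_depth_def using real_of_int_floor_add_one_gt[of "min_ratio A"] by simp

definition deep_packing :: "'a set \<Rightarrow> 'a set" where
  "deep_packing A = packing A (packing_depth A)"

lemma finite_deep_packing: "finite A \<Longrightarrow> finite (deep_packing A)"
  using finite_subset[OF packing_subset] unfolding deep_packing_def by blast

lemma card_deep_packing_Int_nonspan_ge:
  assumes A: "finite A" "1 \<le> min_ratio A" and J: "J \<in> Ind" "288 * card J \<le> r A"
  shows "r A * (143 * packing_depth A + 144) \<le> 288 * card (deep_packing A \<inter> nonspan J)"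
proof -
  let ?L = "real (packing_depth A)" and ?k = "real (r A)" and ?l = "min_ratio A"
  have L: "?L \<le> ?l" "1 \<le> ?L"
    using A(2) by (auto simp: packing_depth_def le_nat_floor)
  have "?k * (?L * (?L - 1)) / (2 * ?l) \<le> ?k * (?L - 1) / 2"
  proof -
    have "?k * (?L * (?L - 1)) = (?k * (?L - 1)) * ?L"
      by (simp add: algebra_simps)
    also have "\<dots> \<le> (?k * (?L - 1)) * ?l"
      using L by (intro mult_left_mono) auto
    finally show ?thesis
      using A(2) by (simp add: field_simps)
  qed
  moreover have "288 * (?L * real (card J)) \<le> ?L * ?k"
    using J(2) L(2) by (simp add: mult.left_commute mult_left_mono)
  moreover have "?L * ?k - ?k * (?L * (?L - 1)) / (2 * ?l) - ?L * real (card J)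
      \<le> real (card (deep_packing A \<inter> nonspan J))"
    using card_packing_Int_nonspan_ge[OF A(1) _ J(1), of "packing_depth A"] A(2)
    unfolding deep_packing_def by simp
  moreover have "2 * (?k * (?L - 1) / 2) = ?L * ?k - ?k" "?k * (143 * ?L + 144) = 143 * (?L * ?k) + 144 * ?k"
    by (simp_all add: field_simps)
  moreover have "\<And>x D y c E k G :: real. x - D - y \<le> c \<Longrightarrow> D \<le> E \<Longrightarrow> 288 * y \<le> x
      \<Longrightarrow> 2 * E = x - k \<Longrightarrow> G = 143 * x + 144 * k \<Longrightarrow> G \<le> 288 * c"
    by linarith
  ultimately have "?k * (143 * ?L + 144) \<le> 288 * real (card (deep_packing A \<inter> nonspan J))"
    by blast
  thus ?thesis
    by (metis (mono_tags, lifting) of_nat_le_iff of_nat_mult of_nat_add of_nat_numeral)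
qed

section \<open>Bad events and their probabilities\<close>

definition small_rank :: "'a set \<Rightarrow> nat" where
  "small_rank A = r A div 288"

definition sparse_bound :: "'a set \<Rightarrow> nat" where
  "sparse_bound A = ((packing_depth A + 1) * r A) div 9"

definition misses_basis :: "'a set \<Rightarrow> 'a set \<Rightarrow> bool" where
  "misses_basis A T \<longleftrightarrow> card (T \<inter> basis_of A) \<le> small_rank A"

definition sparse_off_span :: "'a set \<Rightarrow> 'a set \<Rightarrow> bool" where
  "sparse_off_span A T \<longleftrightarrow> (\<exists>J. J \<in> Ind \<and> J \<subseteq> deep_packing A \<and> card J \<le> small_rank A
     \<and> card (T \<inter> (deep_packing A \<inter> nonspan J)) \<le> sparse_bound A)"

lemma card_misses_basis_le:
  assumes "A \<subseteq> N"
  shows "real (card {S \<in> Pow N. misses_basis A S}) \<le> 2 ^ card N * decay ^ r A"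
proof -
  have "basis_of A \<subseteq> N"
    using basis_of(2) assms by blast
  hence "real (card {S \<in> Pow N. misses_basis A S}) \<le> 2 ^ card N * ((5/8) ^ r A * 4 ^ small_rank A)"
    using card_sparse_Int_le[OF finite_ground, of "basis_of A" "small_rank A"]
    unfolding misses_basis_def by (simp add: basis_of(3) mult.assoc)
  also have "\<dots> \<le> 2 ^ card N * decay ^ r A"
    using basis_bound_le_decay_pow[of "r A"] unfolding small_rank_def by simp
  finally show ?thesis .
qed

lemma card_sparse_off_span_fixed_le:
  assumes A: "finite A" "1 \<le> min_ratio A" and J: "J \<in> Ind" "card J \<le> small_rank A"
  defines "y \<equiv> (r A * (143 * packing_depth A + 144) + 287) div 288"
  shows "real (card {S \<in> Pow N. card (S \<inter> (deep_packing A \<inter> nonspan J)) \<le> sparse_bound A})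
    \<le> 2 ^ card N * ((5/8) ^ y * 4 ^ sparse_bound A)"
proof -
  let ?Y = "deep_packing A \<inter> nonspan J"
  have "?Y \<subseteq> N"
    unfolding nonspan_def by blast
  moreover have "y \<le> card ?Y"
    using card_deep_packing_Int_nonspan_ge[OF A J(1)] J(2) unfolding y_def small_rank_def by linarith
  hence "(5/8::real) ^ card ?Y \<le> (5/8) ^ y"
    by (rule power_decreasing) auto
  hence "2 ^ card N * (5/8) ^ card ?Y * 4 ^ sparse_bound A \<le> 2 ^ card N * ((5/8::real) ^ y * 4 ^ sparse_bound A)"
    unfolding mult.assoc by (intro mult_left_mono mult_right_mono) simp_all
  with card_sparse_Int_le[OF finite_ground \<open>?Y \<subseteq> N\<close>, of "sparse_bound A"] show ?thesis
    by linarith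
qed

lemma card_small_indep_deep_packing_le:
  assumes "finite A"
  shows "real (card {J. J \<in> Ind \<and> J \<subseteq> deep_packing A \<and> card J \<le> j})
    \<le> (17/16) ^ (packing_depth A * r A) * 16 ^ j"
proof -
  have fin: "finite (deep_packing A)"
    using finite_deep_packing[OF assms] .
  have "card {J. J \<in> Ind \<and> J \<subseteq> deep_packing A \<and> card J \<le> j} \<le> card {J \<in> Pow (deep_packing A). card J \<le> j}"
    using fin by (intro card_mono) auto
  hence "real (card {J. J \<in> Ind \<and> J \<subseteq> deep_packing A \<and> card J \<le> j}) \<le> (17/16) ^ card (deep_packing A) * 16 ^ j"
    using card_small_subsets_le[OF fin, of j] by linarith
  also have "\<dots> \<le> (17/16) ^ (packing_depth A * r A) * 16 ^ j"
    using card_packing_le unfolding deep_packing_def by (intro mult_right_mono power_increasing) auto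
  finally show ?thesis .
qed

lemma card_sparse_off_span_le:
  assumes A: "A \<subseteq> N" "1 \<le> min_ratio A"
  shows "real (card {S \<in> Pow N. sparse_off_span A S}) \<le> 2 ^ card N * decay ^ r A"
proof -
  let ?W = "deep_packing A" and ?k = "r A" and ?j = "small_rank A" and ?m = "sparse_bound A"
  let ?y = "(?k * (143 * packing_depth A + 144) + 287) div 288"
  let ?JJ = "{J. J \<in> Ind \<and> J \<subseteq> ?W \<and> card J \<le> ?j}"
  let ?T = "\<lambda>J. {S \<in> Pow N. card (S \<inter> (?W \<inter> nonspan J)) \<le> ?m}"
  have finA: "finite A"
    using finite_subset[OF A(1) finite_ground] .
  have finW: "finite ?W"
    using finite_deep_packing[OF finA] .
  have "{S \<in> Pow N. sparse_off_span A S} \<subseteq> (\<Union>J\<in>?JJ. ?T J)"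
    unfolding sparse_off_span_def by blast
  moreover have "finite (\<Union>J\<in>?JJ. ?T J)"
    by (rule finite_subset[of _ "Pow N"]) (use finite_ground in auto)
  ultimately have "card {S \<in> Pow N. sparse_off_span A S} \<le> card (\<Union>J\<in>?JJ. ?T J)"
    by (intro card_mono)
  also have "\<dots> \<le> (\<Sum>J\<in>?JJ. card (?T J))"
    using finW by (intro card_UN_le) (auto intro: finite_subset[of _ "Pow ?W"])
  finally have "real (card {S \<in> Pow N. sparse_off_span A S}) \<le> (\<Sum>J\<in>?JJ. real (card (?T J)))"
    by (simp flip: of_nat_sum)
  also have "\<dots> \<le> (\<Sum>J\<in>?JJ. 2 ^ card N * ((5/8) ^ ?y * 4 ^ ?m))"
    using card_sparse_off_span_fixed_le[OF finA A(2)] by (intro sum_mono) auto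
  also have "\<dots> = real (card ?JJ) * (2 ^ card N * ((5/8) ^ ?y * 4 ^ ?m))"
    by simp
  also have "\<dots> \<le> (17/16) ^ (packing_depth A * ?k) * 16 ^ ?j * (2 ^ card N * ((5/8) ^ ?y * 4 ^ ?m))"
    using card_small_indep_deep_packing_le[OF finA] by (intro mult_right_mono) simp_all
  also have "\<dots> \<le> 2 ^ card N * decay ^ ?k"
    using span_bound_le_decay_pow[of "packing_depth A" ?k]
    unfolding small_rank_def sparse_bound_def by (simp add: mult_ac mult_left_mono)
  finally show ?thesis .
qed

lemma rank_ge_if_not_misses_basis:
  assumes "\<not> misses_basis A T"
  shows "real (r A) / 288 \<le> real (r T)"
proof -
  have "T \<inter> basis_of A \<in> Ind"
    using indep_subset[OF basis_of(1)] by blast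
  hence "card (T \<inter> basis_of A) \<le> r T"
    using card_indep_le_rank by blast
  hence "r A < 288 * r T"
    using assms unfolding misses_basis_def small_rank_def by linarith
  thus ?thesis
    by simp
qed

text \<open>Elements of Z outside the span of D(Z, mu) lie outside D(Z, mu), and comparing D(Z, mu)
  with Z bounds |Z - D(Z, mu)| by mu (r Z - r D(Z, mu)).\<close>

lemma card_nonspan_basis_Dset_le:
  assumes "Z \<subseteq> N" "0 \<le> mu"
  shows "real (card (Z \<inter> nonspan (basis_of (Dset Ind Z mu))))
    \<le> mu * (real (r Z) - real (r (Dset Ind Z mu)))"
proof -
  let ?B = "Dset Ind Z mu" and ?J = "basis_of (Dset Ind Z mu)"
  have B: "?B \<subseteq> Z"
    using Dset_subset[OF assms] .
  have finZ: "finite Z"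
    using finite_subset[OF assms(1) finite_ground] .
  have "e \<notin> nonspan ?J" if "e \<in> ?B" for e
  proof -
    have "r (insert e ?J) \<le> r ?B"
      using that basis_of(2) by (intro rank_mono) auto
    thus ?thesis
      unfolding nonspan_def using basis_of(3) rank_indep[OF basis_of(1)] by simp
  qed
  hence "Z \<inter> nonspan ?J \<subseteq> Z - ?B"
    by blast
  hence "card (Z \<inter> nonspan ?J) \<le> card Z - card ?B"
    using card_mono[OF finite_Diff[OF finZ]] card_Diff_subset[OF finite_subset[OF B finZ] B] by metis
  moreover have "card ?B \<le> card Z"
    using card_mono[OF finZ B] .
  moreover have "gain mu Z \<le> gain mu ?B"
    using gain_le_gain_Dset[OF assms order_refl] .
  ultimately show ?thesis
    unfolding gain_def by (simp add: of_nat_diff algebra_simps)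
qed

lemma card_nonspan_le_sparse_bound:
  assumes T: "T \<subseteq> N" and A: "0 < r A" and mu: "0 \<le> mu" "9 * mu \<le> min_ratio A"
  defines "Z \<equiv> T \<inter> deep_packing A"
  shows "card (T \<inter> (deep_packing A \<inter> nonspan (basis_of (Dset Ind Z mu)))) \<le> sparse_bound A"
proof -
  let ?J = "basis_of (Dset Ind Z mu)"
  have "deep_packing A \<subseteq> A"
    unfolding deep_packing_def by (rule packing_subset)
  hence "r Z \<le> r A"
    unfolding Z_def by (intro rank_mono) auto
  have "real (card (Z \<inter> nonspan ?J)) \<le> mu * (real (r Z) - real (r (Dset Ind Z mu)))"
    using card_nonspan_basis_Dset_le[of Z mu] T mu(1) unfolding Z_def by blast
  also have "\<dots> \<le> mu * real (r A)"
    using \<open>r Z \<le> r A\<close> mu(1) by (intro mult_left_mono) auto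
  also have "\<dots> < (real (packing_depth A) + 1) * real (r A) / 9"
  proof -
    have "9 * mu < real (packing_depth A) + 1"
      using mu min_ratio_less_packing_depth[of A] by linarith
    hence "9 * mu * real (r A) < (real (packing_depth A) + 1) * real (r A)"
      using A by (intro mult_strict_right_mono) auto
    thus ?thesis
      by simp
  qed
  finally have "real (9 * card (Z \<inter> nonspan ?J)) < real ((packing_depth A + 1) * r A)"
    by (simp add: field_simps)
  hence "9 * card (Z \<inter> nonspan ?J) < (packing_depth A + 1) * r A"
    by (simp only: of_nat_less_iff)
  thus ?thesis
    unfolding sparse_bound_def Z_def by (simp add: Int_assoc less_eq_div_iff_mult_less_eq)
qed

lemma rank_Dset_ge_if_not_sparse_off_span:
  assumes T: "T \<subseteq> N" and A: "0 < r A" and mu: "0 \<le> mu" "9 * mu \<le> min_ratio A"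
    and not_sparse: "\<not> sparse_off_span A T"
  shows "real (r A) / 288 \<le> real (r (Dset Ind T mu))"
proof (rule ccontr)
  let ?Z = "T \<inter> deep_packing A"
  let ?J = "basis_of (Dset Ind ?Z mu)"
  assume "\<not> ?thesis"
  moreover have "r (Dset Ind ?Z mu) \<le> r (Dset Ind T mu)"
    using Dset_mono[OF _ T mu(1), of ?Z] rank_mono by auto
  ultimately have "card ?J * 288 \<le> r A"
    using basis_of(3) by simp
  hence "card ?J \<le> small_rank A"
    unfolding small_rank_def by (simp add: less_eq_div_iff_mult_less_eq)
  moreover have "?J \<subseteq> deep_packing A"
    using basis_of(2) Dset_subset[of ?Z mu] T mu(1) by blast
  ultimately have "sparse_off_span A T"
    unfolding sparse_off_span_def using basis_of(1) card_nonspan_le_sparse_bound[OF T A mu] by blast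
  thus False
    using not_sparse by simp
qed

section \<open>Good halves approximate the density curve\<close>

definition heavy_levels :: "'a set set" where
  "heavy_levels = {Dset Ind N l | l. 0 < l \<and> 288 \<le> r (Dset Ind N l)}"

definition good :: "'a set \<Rightarrow> bool" where
  "good T \<longleftrightarrow> (\<forall>A\<in>heavy_levels. \<not> misses_basis A T \<and> (9 \<le> min_ratio A \<longrightarrow> \<not> sparse_off_span A T))"

lemma rank_Dset_ge_if_good:
  assumes T: "T \<subseteq> N" "good T" and l: "0 < l" "288 \<le> r (Dset Ind N l)"
  shows "real (r (Dset Ind N l)) / 288 \<le> real (r (Dset Ind T (max 1 (l / 9))))"
proof -
  let ?A = "Dset Ind N l"
  have "?A \<in> heavy_levels"
    unfolding heavy_levels_def using l by blast
  hence not_bad: "\<not> misses_basis ?A T" "9 \<le> min_ratio ?A \<Longrightarrow> \<not> sparse_off_span ?A T"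
    using T(2) unfolding good_def by auto
  show ?thesis
  proof (cases "l < 9")
    case True
    thus ?thesis
      using rank_ge_if_not_misses_basis[OF not_bad(1)] Dset_eq_self[OF T(1)] by simp
  next
    case False
    have "l \<le> min_ratio ?A"
      using le_min_ratio_Dset l by simp
    thus ?thesis
      using rank_Dset_ge_if_not_sparse_off_span[OF T(1) _ _ _ not_bad(2)] False l by simp
  qed
qed

lemma downshift_le_rho_if_good:
  assumes T: "T \<subseteq> N" "good T" and t: "0 < t"
  shows "downshift 288 9 (rho N) t \<le> rho T t"
proof -
  define t' where "t' = max 1 t"
  have t': "t \<le> t'" "1 \<le> t'"
    unfolding t'_def by auto
  have downshift: "downshift 288 9 (rho N) t
      = (if 0 < rho N (288 * t') / 9 \<and> rho N (288 * t') / 9 < 1 then 1 else rho N (288 * t') / 9)"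
    unfolding downshift_def t'_def by (simp add: max_def)
  show ?thesis
  proof (cases "0 < rho N (288 * t')")
    case False
    thus ?thesis
      using rho_nonneg[OF T(1), of t] unfolding downshift by auto
  next
    case True
    have level: "max 1 (l / 9) \<le> rho T t'" if "0 < l" "288 * t' \<le> real (r (Dset Ind N l))" for l
      using rank_Dset_ge_if_good[OF T that(1)] that t' by (intro le_rho[OF T(1)]) auto
    obtain l0 where "0 < l0" "288 * t' \<le> real (r (Dset Ind N l0))"
      using ex_level_if_rho_pos[OF order_refl True] .
    hence "1 \<le> rho T t'"
      using level by fastforce
    moreover have "rho N (288 * t') \<le> 9 * rho T t'"
      using level calculation by (intro rho_le[OF order_refl]) force+
    ultimately have "downshift 288 9 (rho N) t \<le> rho T t'"
      unfolding downshift by auto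
    also have "\<dots> \<le> rho T t"
      using rho_antimono[OF T(1) t t'(1)] .
    finally show ?thesis .
  qed
qed

lemma is_approx_rho_if_good:
  assumes "T \<subseteq> N" "good T"
  shows "is_approx 288 9 (rho N) (rho T)"
  unfolding is_approx_def
  using rho_antimono[OF assms(1)] rho_nonneg[OF assms(1)] rho_le_rho_ground[OF assms(1)]
    downshift_le_rho_if_good[OF assms] by blast

lemma heavy_levels_subset: "A \<in> heavy_levels \<Longrightarrow> A \<subseteq> N"
  unfolding heavy_levels_def using Dset_subset[OF order_refl] less_imp_le by blast

lemma finite_heavy_levels: "finite heavy_levels"
  by (rule finite_subset[of _ "Pow N"]) (use finite_ground heavy_levels_subset in auto)

lemma inj_on_rank_heavy_levels: "inj_on r heavy_levels"
proof (rule inj_onI)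
  fix A B
  assume "A \<in> heavy_levels" "B \<in> heavy_levels" "r A = r B"
  then obtain l l' where "A = Dset Ind N l" "0 < l" "B = Dset Ind N l'" "0 < l'"
    unfolding heavy_levels_def by auto
  thus "A = B"
    using Dset_eq_if_rank_eq[OF order_refl, of l l'] Dset_eq_if_rank_eq[OF order_refl, of l' l] \<open>r A = r B\<close>
    by (cases "l \<le> l'") auto
qed

lemma rank_heavy_levels:
  assumes "A \<in> heavy_levels"
  shows "r A \<in> {288..card N}"
proof -
  have "A \<subseteq> N"
    using heavy_levels_subset[OF assms] .
  hence "r A \<le> card N"
    using rank_le_card[OF finite_subset[OF _ finite_ground]] card_mono[OF finite_ground] le_trans by blast
  moreover have "288 \<le> r A"
    using assms unfolding heavy_levels_def by blast
  ultimately show ?thesis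
    by simp
qed

lemma card_bad_at_level_le:
  assumes "A \<in> heavy_levels"
  shows "real (card {S \<in> Pow N. misses_basis A S \<or> (9 \<le> min_ratio A \<and> sparse_off_span A S)})
    \<le> 2 * (2 ^ card N * decay ^ r A)"
proof -
  have A: "A \<subseteq> N"
    using heavy_levels_subset[OF assms] .
  have "{S \<in> Pow N. misses_basis A S \<or> (9 \<le> min_ratio A \<and> sparse_off_span A S)}
      \<subseteq> {S \<in> Pow N. misses_basis A S} \<union> (if 9 \<le> min_ratio A then {S \<in> Pow N. sparse_off_span A S} else {})"
    by auto
  hence "card {S \<in> Pow N. misses_basis A S \<or> (9 \<le> min_ratio A \<and> sparse_off_span A S)}
      \<le> card {S \<in> Pow N. misses_basis A S}
        + card (if 9 \<le> min_ratio A then {S \<in> Pow N. sparse_off_span A S} else {})"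
    using finite_ground by (intro order_trans[OF card_mono card_Un_le]) auto
  moreover have "real (card (if 9 \<le> min_ratio A then {S \<in> Pow N. sparse_off_span A S} else {}))
      \<le> 2 ^ card N * decay ^ r A"
    using card_sparse_off_span_le[OF A] decay_nonneg by auto
  ultimately show ?thesis
    using card_misses_basis_le[OF A] by linarith
qed

lemma card_not_good_le: "real (card {S \<in> Pow N. \<not> good S}) \<le> 2 ^ card N * (1152 / 2 ^ 20)"
proof -
  let ?Bad = "\<lambda>A. {S \<in> Pow N. misses_basis A S \<or> (9 \<le> min_ratio A \<and> sparse_off_span A S)}"
  have "{S \<in> Pow N. \<not> good S} = (\<Union>A\<in>heavy_levels. ?Bad A)"
    unfolding good_def by auto
  hence "card {S \<in> Pow N. \<not> good S} \<le> (\<Sum>A\<in>heavy_levels. card (?Bad A))"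
    using card_UN_le[OF finite_heavy_levels] by simp
  hence "real (card {S \<in> Pow N. \<not> good S}) \<le> (\<Sum>A\<in>heavy_levels. real (card (?Bad A)))"
    by (simp flip: of_nat_sum)
  also have "\<dots> \<le> (\<Sum>A\<in>heavy_levels. 2 * (2 ^ card N * decay ^ r A))"
    by (rule sum_mono) (rule card_bad_at_level_le)
  also have "\<dots> = 2 * 2 ^ card N * (\<Sum>k\<in>r ` heavy_levels. decay ^ k)"
    by (simp add: sum.reindex[OF inj_on_rank_heavy_levels] sum_distrib_left mult.assoc)
  also have "\<dots> \<le> 2 * 2 ^ card N * (\<Sum>k\<in>{288..card N}. decay ^ k)"
    using rank_heavy_levels decay_nonneg by (intro mult_left_mono sum_mono2) auto
  also have "\<dots> \<le> 2 * 2 ^ card N * (576 / 2 ^ 20)"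
    using sum_decay_power_le by (intro mult_left_mono) auto
  finally show ?thesis
    by simp
qed

end

theorem theorem3p6:
  fixes N :: "'a set" and Ind :: "'a set set"
  assumes "matroid N Ind" and "loopless N Ind"
  shows "real (card {S. S \<subseteq> N \<and>
            is_approx 288 9 (rank_density N Ind) (rank_density S (restr_ind Ind S)) \<and>
            is_approx 288 9 (rank_density N Ind) (rank_density (N - S) (restr_ind Ind (N - S)))})
         / 2 ^ card N \<ge> 1 / 100"
proof -
  interpret finite_matroid N Ind
    using assms(1) by unfold_locales
  let ?G = "{S. S \<subseteq> N \<and>
            is_approx 288 9 (rank_density N Ind) (rank_density S (restr_ind Ind S)) \<and>
            is_approx 288 9 (rank_density N Ind) (rank_density (N - S) (restr_ind Ind (N - S)))}"
  have "S \<in> ?G" if "S \<subseteq> N" "good S" "good (N - S)" for S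
    using is_approx_rho_if_good[OF that(1,2)] is_approx_rho_if_good[OF _ that(3)] that(1)
    by (simp add: restr_ind_ground)
  hence "{S \<in> Pow N. good S \<and> good (N - S)} \<subseteq> ?G"
    by blast
  hence "real (card {S \<in> Pow N. good S \<and> good (N - S)}) \<le> real (card ?G)"
    by (intro of_nat_mono card_mono) (use finite_ground in auto)
  hence "2 ^ card N - 2 * (2 ^ card N * (1152 / 2 ^ 20)) \<le> real (card ?G)"
    using card_Pow_and_complement_ge[OF finite_ground, of good] card_not_good_le by linarith
  thus ?thesis
    by (simp add: pos_le_divide_eq)
qed

end
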